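(* Let $X$ be a closed subset of $\mathbb{R}^d$, let $(K_l)_{l\in\mathbb{N}}$ be a fundamental sequence of compact sets covering $\mathbb{R}^d$, let $t\in\mathscr{D}(\mathbb{R}^d\setminus X)'$ be compactly supported and let $f\in\mathscr{E}(\mathbb{R}^d\setminus X)$. Suppose: (1) there exist $C_1,s_1>0$ and integers $k,l$ such that $|\langle t,\varphi\rangle|\le C_1[1+d(\operatorname{Supp}\varphi,X)^{-s_1}]\|\varphi\|_k^l$ for every $\varphi\in\mathcal{I}(X,\mathbb{R}^d)$; (2) for every $k'\in\mathbb{N}$ and every compact $K\subseteq\mathbb{R}^d$ there exist $C_2,s_2>0$ with $\sup_{|\nu|\le k'}|\partial^\nu f(x)|\le C_2[1+d(x,X)^{-s_2}]$ for all $x\in K\setminus X$. Let $s_2$ be the constant given by (2) for $k'=k$ and $K=K_l$. Then there exists $C>0$ such that $|\langle ft,\varphi\rangle|\le C[1+d(\operatorname{Supp}\varphi,X)^{-(s_1+s_2)}]\|\varphi\|_k^l$ for every $\varphi\in\mathcal{I}(X,\mathbb{R}^d)$.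
   Context: A fundamental sequence: compacts $K_l$ with $K_1\ne\emptyset$, $K_l\subseteq$ interior of $K_{l+1}$, union $\mathbb{R}^d$. $\|\varphi\|_k^l=\sup_{x\in K_l,|\nu|\le k}|\partial^\nu\varphi(x)|$. $\mathcal{I}(X,\mathbb{R}^d)=\{\varphi\in\mathscr{E}(\mathbb{R}^d):\operatorname{Supp}\varphi\cap X=\emptyset\}$; pairings with $\varphi\in\mathcal{I}(X,\mathbb{R}^d)$ are understood via restriction to $\mathbb{R}^d\setminus X$ and the canonical extension of compactly supported distributions to smooth functions. $ft$ is the distribution $\psi\mapsto\langle t,f\psi\rangle$. $d$ is the Euclidean distance, with the convention $0^{-s}=+\infty$. *)

theory Defs
  imports "HOL-Analysis.Analysis"
begin

text \<open>For lists of basis vectors these are exactly the partial derivatives of the paper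
  (for smooth functions the order of differentiation is irrelevant).\<close>
fun dderiv :: "'a::euclidean_space list \<Rightarrow> ('a \<Rightarrow> 'b::real_normed_vector) \<Rightarrow> 'a \<Rightarrow> 'b" where
  "dderiv [] g = g"
| "dderiv (v # vs) g = (\<lambda>x. frechet_derivative (dderiv vs g) (at x) v)"

definition smooth_on :: "'a::euclidean_space set \<Rightarrow> ('a \<Rightarrow> 'b::real_normed_vector) \<Rightarrow> bool" where
  "smooth_on U g \<longleftrightarrow>
     (\<forall>vs. set vs \<subseteq> Basis \<longrightarrow> (\<forall>x\<in>U. dderiv vs g differentiable (at x)))"

definition seminorm_on :: "'a::euclidean_space set \<Rightarrow> nat \<Rightarrow> ('a \<Rightarrow> 'b::real_normed_vector) \<Rightarrow> real" where
  "seminorm_on K k g =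
     Sup (insert 0 {norm (dderiv vs g x) | x vs. x \<in> K \<and> set vs \<subseteq> Basis \<and> length vs \<le> k})"

definition Supp :: "('a::euclidean_space \<Rightarrow> 'b::zero) \<Rightarrow> 'a set" where
  "Supp g = closure {x. g x \<noteq> 0}"

definition Ispace :: "'a::euclidean_space set \<Rightarrow> ('a \<Rightarrow> complex) set" where
  "Ispace X = {\<phi>. smooth_on UNIV \<phi> \<and> Supp \<phi> \<inter> X = {}}"

definition fundamental_seq :: "(nat \<Rightarrow> 'a::euclidean_space set) \<Rightarrow> bool" where
  "fundamental_seq K \<longleftrightarrow>
     (\<forall>l\<ge>1. compact (K l)) \<and> K 1 \<noteq> {} \<and>
     (\<forall>l\<ge>1. K l \<subseteq> interior (K (Suc l))) \<and> (\<Union>l\<in>{1..}. K l) = UNIV"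

text \<open>Distance d(A,X) between sets with the conventions: inf over the empty set is
  +infinity (so d = +infinity if A or X is empty).  dist_pos A X says d(A,X) > 0;
  when d(A,X) = 0 the factor d^(-s) is +infinity and the bound is vacuous.
  weight s A X = 1 + d(A,X)^(-s), valid when dist_pos A X holds.\<close>
definition dist_pos :: "'a::metric_space set \<Rightarrow> 'a set \<Rightarrow> bool" where
  "dist_pos A X \<longleftrightarrow> A = {} \<or> X = {} \<or> setdist A X > 0"

definition weight :: "real \<Rightarrow> 'a::metric_space set \<Rightarrow> 'a set \<Rightarrow> real" where
  "weight s A X = (if A = {} \<or> X = {} then 1 else 1 + setdist A X powr (-s))"

text \<open>Compactly supported distributions on the open set U, identified (canonical extension)
  with continuous linear functionals on E(U) = smooth functions on U; the functional only
  depends on the restriction of its argument to U.\<close>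
definition compact_distribution :: "'a::euclidean_space set \<Rightarrow> (('a \<Rightarrow> complex) \<Rightarrow> complex) \<Rightarrow> bool" where
  "compact_distribution U t \<longleftrightarrow>
     (\<forall>\<phi> \<psi>. smooth_on U \<phi> \<longrightarrow> smooth_on U \<psi> \<longrightarrow> t (\<lambda>x. \<phi> x + \<psi> x) = t \<phi> + t \<psi>) \<and>
     (\<forall>c \<phi>. smooth_on U \<phi> \<longrightarrow> t (\<lambda>x. c * \<phi> x) = c * t \<phi>) \<and>
     (\<forall>\<phi> \<psi>. (\<forall>x\<in>U. \<phi> x = \<psi> x) \<longrightarrow> t \<phi> = t \<psi>) \<and>
     (\<exists>K k C. compact K \<and> K \<subseteq> U \<and>
        (\<forall>\<phi>. smooth_on U \<phi> \<longrightarrow> norm (t \<phi>) \<le> C * seminorm_on K k \<phi>))"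

end

theory Submission
  imports Defs
begin

text \<open>Leibniz' rule bounds every derivative of order at most k of f\<phi> at a point
  x \<in> Supp \<phi> by 2^k times the product of the corresponding bounds for f and \<phi>.  By (2),
  the bound for f at x is C2(1 + d(x,X)^-s2) \<le> C2(1 + d(Supp \<phi>,X)^-s2), and f\<phi> vanishes
  off Supp \<phi>.  Since Supp(f\<phi>) \<subseteq> Supp \<phi>, hypothesis (1) applied to f\<phi> then yields the
  product of the two weights, which is at most 2(1 + d^-(s1+s2)) because d^-s1 and
  d^-s2 lie on the same side of 1.\<close>

lemma frechet_derivative_eq_within_open:
  assumes "open U" "x \<in> U" "\<And>y. y \<in> U \<Longrightarrow> g y = h y"
  shows "frechet_derivative g (at x) = frechet_derivative h (at x)"
proof -
  have "(g has_derivative D) (at x) \<longleftrightarrow> (h has_derivative D) (at x)" for D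
    using has_derivative_transform_within_open[OF _ assms(1,2), of g D UNIV h]
          has_derivative_transform_within_open[OF _ assms(1,2), of h D UNIV g] assms(3)
    by auto
  then show ?thesis unfolding frechet_derivative_def by simp
qed

lemma differentiable_transform_within_open:
  assumes "g differentiable (at x)" "open U" "x \<in> U" "\<And>y. y \<in> U \<Longrightarrow> g y = h y"
  shows "h differentiable (at x)"
proof -
  obtain D where "(g has_derivative D) (at x)" using assms(1) unfolding differentiable_def by blast
  then have "(h has_derivative D) (at x)" by (rule has_derivative_transform_within_open[OF _ assms(2-4)])
  then show ?thesis unfolding differentiable_def by blast
qed

lemma dderiv_transform_within_open:
  assumes "open U" "\<And>y. y \<in> U \<Longrightarrow> g y = h y"
  shows "x \<in> U \<Longrightarrow> dderiv vs g x = dderiv vs h x"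
proof (induction vs arbitrary: x)
  case Nil then show ?case using assms by simp
next
  case (Cons v vs)
  have "frechet_derivative (dderiv vs g) (at x) = frechet_derivative (dderiv vs h) (at x)"
    by (rule frechet_derivative_eq_within_open[OF assms(1) Cons.prems]) (rule Cons.IH)
  then show ?case by simp
qed

lemma dderiv_zero [simp]: "dderiv vs (\<lambda>x. 0) = (\<lambda>x. 0)"
  by (induction vs) auto

lemma dderiv_eq_0_outside_Supp:
  assumes "x \<notin> Supp g"
  shows "dderiv vs g x = 0"
proof -
  have "open (- Supp g)" unfolding Supp_def by (intro open_Compl closed_closure)
  moreover have "g y = 0" if "y \<in> - Supp g" for y
    using that closure_subset[of "{x. g x \<noteq> 0}"] unfolding Supp_def by auto
  ultimately have "dderiv vs g x = dderiv vs (\<lambda>x. 0) x"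
    using assms by (intro dderiv_transform_within_open[of "- Supp g"]) auto
  then show ?thesis by simp
qed

text \<open>The terms of Leibniz' rule for dderiv vs (f g): each direction in vs is assigned to f or to g.\<close>
fun splittings :: "'a list \<Rightarrow> ('a list \<times> 'a list) list" where
  "splittings [] = [([], [])]"
| "splittings (v # vs) =
     map (\<lambda>(a, b). (v # a, b)) (splittings vs) @ map (\<lambda>(a, b). (a, v # b)) (splittings vs)"

lemma length_splittings: "length (splittings vs) = 2 ^ length vs"
  by (induction vs) auto

lemma splittings_subset:
  "p \<in> set (splittings vs) \<Longrightarrow>
     set (fst p) \<subseteq> set vs \<and> set (snd p) \<subseteq> set vs \<and>
     length (fst p) \<le> length vs \<and> length (snd p) \<le> length vs"
  by (induction vs arbitrary: p) fastforce+

lemma has_derivative_sum_list: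
  assumes "\<And>p. p \<in> set L \<Longrightarrow> (F p has_derivative F' p) (at x)"
  shows "((\<lambda>y. \<Sum>p\<leftarrow>L. F p y) has_derivative (\<lambda>h. \<Sum>p\<leftarrow>L. F' p h)) (at x)"
  using assms by (induction L) (auto intro: has_derivative_add)

lemma norm_sum_list_le:
  fixes F :: "'b \<Rightarrow> 'c::real_normed_vector"
  assumes "\<And>p. p \<in> set L \<Longrightarrow> norm (F p) \<le> B"
  shows "norm (\<Sum>p\<leftarrow>L. F p) \<le> real (length L) * B"
  using assms
proof (induction L)
  case (Cons a L)
  have "norm (\<Sum>p\<leftarrow>a # L. F p) \<le> norm (F a) + norm (\<Sum>p\<leftarrow>L. F p)"
    by (simp add: norm_triangle_ineq)
  also have "\<dots> \<le> B + real (length L) * B" using Cons by (intro add_mono) auto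
  finally show ?case by (simp add: algebra_simps)
qed simp

lemma has_derivative_leibniz_sum:
  fixes f g :: "'a::euclidean_space \<Rightarrow> complex"
  assumes "smooth_on U f" "smooth_on U g" "set vs \<subseteq> Basis" "x \<in> U"
  shows "((\<lambda>y. \<Sum>(a, b)\<leftarrow>splittings vs. dderiv a f y * dderiv b g y) has_derivative
          (\<lambda>h. \<Sum>(a, b)\<leftarrow>splittings vs. dderiv a f x * frechet_derivative (dderiv b g) (at x) h
                 + frechet_derivative (dderiv a f) (at x) h * dderiv b g x)) (at x)"
  unfolding split_def
proof (rule has_derivative_sum_list)
  fix p assume "p \<in> set (splittings vs)"
  then have "set (fst p) \<subseteq> Basis" "set (snd p) \<subseteq> Basis"
    using splittings_subset assms(3) by blast+
  then have "(dderiv (fst p) f has_derivative frechet_derivative (dderiv (fst p) f) (at x)) (at x)"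
    "(dderiv (snd p) g has_derivative frechet_derivative (dderiv (snd p) g) (at x)) (at x)"
    using assms(1,2,4) frechet_derivative_works unfolding smooth_on_def by blast+
  then show "((\<lambda>y. dderiv (fst p) f y * dderiv (snd p) g y) has_derivative
      (\<lambda>h. dderiv (fst p) f x * frechet_derivative (dderiv (snd p) g) (at x) h +
           frechet_derivative (dderiv (fst p) f) (at x) h * dderiv (snd p) g x)) (at x)"
    by (rule has_derivative_mult)
qed

lemma dderiv_mult:
  fixes f g :: "'a::euclidean_space \<Rightarrow> complex"
  assumes "open U" "smooth_on U f" "smooth_on U g"
  shows "set vs \<subseteq> Basis \<Longrightarrow> x \<in> U \<Longrightarrow>
     dderiv vs (\<lambda>y. f y * g y) x = (\<Sum>(a, b)\<leftarrow>splittings vs. dderiv a f x * dderiv b g x)"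
proof (induction vs arbitrary: x)
  case Nil then show ?case by simp
next
  case (Cons v vs)
  let ?h = "\<lambda>y. \<Sum>(a, b)\<leftarrow>splittings vs. dderiv a f y * dderiv b g y"
  have "frechet_derivative (dderiv vs (\<lambda>y. f y * g y)) (at x) = frechet_derivative ?h (at x)"
    by (rule frechet_derivative_eq_within_open[OF assms(1) Cons.prems(2)])
       (use Cons in auto)
  then have "dderiv (v # vs) (\<lambda>y. f y * g y) x = frechet_derivative ?h (at x) v" by simp
  also have "\<dots> = (\<Sum>(a, b)\<leftarrow>splittings vs.
                      dderiv a f x * dderiv (v # b) g x + dderiv (v # a) f x * dderiv b g x)"
    using has_derivative_leibniz_sum[OF assms(2,3), of vs x] Cons.prems
    by (simp flip: frechet_derivative_at add: split_def)
  also have "\<dots> = (\<Sum>(a, b)\<leftarrow>splittings (v # vs). dderiv a f x * dderiv b g x)"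
    by (simp add: sum_list_addf comp_def split_def add.commute)
  finally show ?case .
qed

lemma smooth_on_subset: "smooth_on U g \<Longrightarrow> V \<subseteq> U \<Longrightarrow> smooth_on V g"
  unfolding smooth_on_def by blast

lemma smooth_on_mult:
  fixes f g :: "'a::euclidean_space \<Rightarrow> complex"
  assumes "open U" "smooth_on U f" "smooth_on U g"
  shows "smooth_on U (\<lambda>y. f y * g y)"
  unfolding smooth_on_def
proof (intro allI impI ballI)
  fix vs :: "'a list" and x assume vs: "set vs \<subseteq> Basis" and x: "x \<in> U"
  have "(\<lambda>y. \<Sum>(a, b)\<leftarrow>splittings vs. dderiv a f y * dderiv b g y) differentiable (at x)"
    using has_derivative_leibniz_sum[OF assms(2,3) vs x] unfolding differentiable_def by blast
  then show "dderiv vs (\<lambda>y. f y * g y) differentiable (at x)"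
    by (rule differentiable_transform_within_open[OF _ assms(1) x]) (simp add: dderiv_mult[OF assms vs])
qed

lemma Supp_mult_subset:
  fixes f \<phi> :: "'a::euclidean_space \<Rightarrow> 'b::mult_zero"
  shows "Supp (\<lambda>y. f y * \<phi> y) \<subseteq> Supp \<phi>"
  unfolding Supp_def by (intro closure_mono) auto

text \<open>This is what makes f\<phi> a test function in I(X,\<real>^d) although f is only smooth off X.\<close>
lemma smooth_on_UNIV_mult_Supp_subset:
  fixes f \<phi> :: "'a::euclidean_space \<Rightarrow> complex"
  assumes "open U" "smooth_on U f" "smooth_on UNIV \<phi>" "Supp \<phi> \<subseteq> U"
  shows "smooth_on UNIV (\<lambda>y. f y * \<phi> y)"
  unfolding smooth_on_def
proof (intro allI impI ballI)
  fix vs :: "'a list" and x :: 'a assume vs: "set vs \<subseteq> Basis"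
  have "smooth_on U \<phi>" using assms(3) smooth_on_subset by blast
  then have diff_U: "dderiv vs (\<lambda>y. f y * \<phi> y) differentiable (at x)" if "x \<in> U"
    using smooth_on_mult[OF assms(1,2)] vs that unfolding smooth_on_def by blast
  have open_out: "open (- Supp \<phi>)" unfolding Supp_def by (intro open_Compl closed_closure)
  have zero_out: "0 = dderiv vs (\<lambda>y. f y * \<phi> y) y" if "y \<in> - Supp \<phi>" for y
  proof -
    have "y \<notin> Supp (\<lambda>y. f y * \<phi> y)" using that Supp_mult_subset by blast
    then show ?thesis by (simp add: dderiv_eq_0_outside_Supp)
  qed
  have diff_out: "dderiv vs (\<lambda>y. f y * \<phi> y) differentiable (at x)" if "x \<in> - Supp \<phi>"
    using differentiable_transform_within_open[OF differentiable_const open_out that zero_out] .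
  show "dderiv vs (\<lambda>y. f y * \<phi> y) differentiable (at x)"
    using diff_U diff_out assms(4) by (cases "x \<in> U") auto
qed

lemma seminorm_on_bdd_above:
  assumes "\<And>vs. set vs \<subseteq> Basis \<Longrightarrow> bounded ((\<lambda>x. norm (dderiv vs g x)) ` K)"
  shows "bdd_above (insert 0 {norm (dderiv vs g x) | x vs. x \<in> K \<and> set vs \<subseteq> Basis \<and> length vs \<le> k})"
proof -
  let ?L = "{vs. set vs \<subseteq> (Basis :: 'a set) \<and> length vs \<le> k}"
  have "finite ?L" by (rule finite_lists_length_le) simp
  moreover have "{norm (dderiv vs g x) | x vs. x \<in> K \<and> set vs \<subseteq> Basis \<and> length vs \<le> k}
      = (\<Union>vs\<in>?L. (\<lambda>x. norm (dderiv vs g x)) ` K)" by auto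
  ultimately show ?thesis using assms by (auto intro: bounded_imp_bdd_above)
qed

lemma seminorm_on_bdd_above_compact:
  assumes "compact K" "smooth_on K g"
  shows "bdd_above (insert 0 {norm (dderiv vs g x) | x vs. x \<in> K \<and> set vs \<subseteq> Basis \<and> length vs \<le> k})"
proof (rule seminorm_on_bdd_above)
  fix vs :: "'a list" assume "set vs \<subseteq> Basis"
  then have "continuous_on K (\<lambda>x. norm (dderiv vs g x))"
    using assms(2) differentiable_imp_continuous_within unfolding smooth_on_def
    by (intro continuous_on_norm continuous_at_imp_continuous_on) blast
  then show "bounded ((\<lambda>x. norm (dderiv vs g x)) ` K)"
    using assms(1) compact_continuous_image compact_imp_bounded by blast
qed

lemma seminorm_on_upper:
  assumes "bdd_above (insert 0 {norm (dderiv vs g x) | x vs. x \<in> K \<and> set vs \<subseteq> Basis \<and> length vs \<le> k})"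
    and "x \<in> K" "set vs \<subseteq> Basis" "length vs \<le> k"
  shows "norm (dderiv vs g x) \<le> seminorm_on K k g"
  unfolding seminorm_on_def by (rule cSup_upper[OF _ assms(1)]) (use assms(2-4) in blast)

lemma seminorm_on_nonneg:
  assumes "bdd_above (insert 0 {norm (dderiv vs g x) | x vs. x \<in> K \<and> set vs \<subseteq> Basis \<and> length vs \<le> k})"
  shows "0 \<le> seminorm_on K k g"
  unfolding seminorm_on_def by (rule cSup_upper[OF _ assms]) blast

lemma seminorm_on_least:
  assumes "0 \<le> B"
    and "\<And>x vs. x \<in> K \<Longrightarrow> set vs \<subseteq> Basis \<Longrightarrow> length vs \<le> k \<Longrightarrow> norm (dderiv vs g x) \<le> B"
  shows "seminorm_on K k g \<le> B"
  unfolding seminorm_on_def using assms by (intro cSup_least) auto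

lemma norm_dderiv_le_seminorm_on_singleton:
  "set vs \<subseteq> Basis \<Longrightarrow> length vs \<le> k \<Longrightarrow> norm (dderiv vs g x) \<le> seminorm_on {x} k g"
  by (rule seminorm_on_upper[OF seminorm_on_bdd_above]) auto

lemma norm_dderiv_mult_le:
  fixes f g :: "'a::euclidean_space \<Rightarrow> complex"
  assumes "open U" "smooth_on U f" "smooth_on U g" "x \<in> U" "set vs \<subseteq> Basis" "0 \<le> A"
    and f_bound: "\<And>a. set a \<subseteq> Basis \<Longrightarrow> length a \<le> length vs \<Longrightarrow> norm (dderiv a f x) \<le> A"
    and g_bound: "\<And>b. set b \<subseteq> Basis \<Longrightarrow> length b \<le> length vs \<Longrightarrow> norm (dderiv b g x) \<le> B"
  shows "norm (dderiv vs (\<lambda>y. f y * g y) x) \<le> 2 ^ length vs * (A * B)"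
proof -
  have "norm (dderiv (fst p) f x * dderiv (snd p) g x) \<le> A * B"
    if "p \<in> set (splittings vs)" for p
    using splittings_subset[OF that] assms(5,6) f_bound[of "fst p"] g_bound[of "snd p"]
    unfolding norm_mult by (intro mult_mono) auto
  then have "norm (\<Sum>p\<leftarrow>splittings vs. dderiv (fst p) f x * dderiv (snd p) g x)
      \<le> real (length (splittings vs)) * (A * B)"
    by (rule norm_sum_list_le)
  then show ?thesis
    using dderiv_mult[OF assms(1-3,5,4)] by (simp add: length_splittings split_def)
qed

lemma seminorm_on_mult_le:
  fixes f \<phi> :: "'a::euclidean_space \<Rightarrow> complex"
  assumes "open U" "smooth_on U f" "smooth_on UNIV \<phi>" "Supp \<phi> \<subseteq> U" "compact K" "0 \<le> A"
    and f_bound: "\<And>x. x \<in> K \<inter> Supp \<phi> \<Longrightarrow> seminorm_on {x} k f \<le> A"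
  shows "seminorm_on K k (\<lambda>y. f y * \<phi> y) \<le> 2 ^ k * A * seminorm_on K k \<phi>"
proof -
  define M where "M = seminorm_on K k \<phi>"
  have bdd_\<phi>: "bdd_above (insert 0 {norm (dderiv vs \<phi> x) | x vs. x \<in> K \<and> set vs \<subseteq> Basis \<and> length vs \<le> k})"
    by (rule seminorm_on_bdd_above_compact[OF assms(5) smooth_on_subset[OF assms(3)]]) simp
  then have "0 \<le> M" unfolding M_def by (rule seminorm_on_nonneg)
  show ?thesis unfolding M_def[symmetric]
  proof (rule seminorm_on_least)
    show "0 \<le> 2 ^ k * A * M" using \<open>0 \<le> A\<close> \<open>0 \<le> M\<close> by simp
    fix x and vs :: "'a list" assume x: "x \<in> K" and vs: "set vs \<subseteq> Basis" and len: "length vs \<le> k"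
    show "norm (dderiv vs (\<lambda>y. f y * \<phi> y) x) \<le> 2 ^ k * A * M"
    proof (cases "x \<in> Supp \<phi>")
      case False
      then have "x \<notin> Supp (\<lambda>y. f y * \<phi> y)" using Supp_mult_subset by blast
      then show ?thesis using \<open>0 \<le> A\<close> \<open>0 \<le> M\<close> by (simp add: dderiv_eq_0_outside_Supp)
    next
      case True
      have "norm (dderiv a f x) \<le> A" if "set a \<subseteq> Basis" "length a \<le> length vs" for a
      proof -
        have "norm (dderiv a f x) \<le> seminorm_on {x} k f"
          using that(2) len by (intro norm_dderiv_le_seminorm_on_singleton[OF that(1)]) simp
        also have "\<dots> \<le> A" using f_bound x True by blast
        finally show ?thesis .
      qed
      moreover have "norm (dderiv b \<phi> x) \<le> M" if "set b \<subseteq> Basis" "length b \<le> length vs" for b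
        unfolding M_def using seminorm_on_upper[OF bdd_\<phi> x that(1)] that(2) len by linarith
      ultimately have "norm (dderiv vs (\<lambda>y. f y * \<phi> y) x) \<le> 2 ^ length vs * (A * M)"
        using True assms(4)
        by (intro norm_dderiv_mult_le[OF assms(1,2) smooth_on_subset[OF assms(3)] _ vs assms(6)]) auto
      also have "\<dots> \<le> 2 ^ k * (A * M)"
        using len \<open>0 \<le> A\<close> \<open>0 \<le> M\<close> by (intro mult_right_mono power_increasing) auto
      finally show ?thesis by (simp add: mult.assoc)
    qed
  qed
qed

lemma weight_ge_1: "1 \<le> weight s A X"
  unfolding weight_def by auto

lemma weight_nonneg [simp]: "0 \<le> weight s A X"
  using weight_ge_1 by (rule order_trans[OF zero_le_one])

lemma dist_pos_subset:
  assumes "dist_pos A X" "B \<subseteq> A"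
  shows "dist_pos B X"
  using assms setdist_subset_left[of B A X] unfolding dist_pos_def by force

lemma weight_antimono:
  assumes "dist_pos A X" "B \<subseteq> A" "0 \<le> s"
  shows "weight s B X \<le> weight s A X"
proof (cases "B = {} \<or> X = {}")
  case True
  then show ?thesis using weight_ge_1 by (auto simp: weight_def)
next
  case False
  then have "0 < setdist A X" "setdist A X \<le> setdist B X"
    using assms(1,2) setdist_subset_left[of B A X] unfolding dist_pos_def by auto
  then have "setdist B X powr (-s) \<le> setdist A X powr (-s)"
    using assms(3) by (intro powr_mono2') auto
  then show ?thesis using False assms(2) by (auto simp: weight_def)
qed

text \<open>d^-s1 and d^-s2 lie on the same side of 1, so (d^-s1 - 1)(d^-s2 - 1) \<ge> 0.\<close>
lemma one_plus_powr_mult_le: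
  fixes d s1 s2 :: real
  assumes "0 < d" "0 \<le> s1" "0 \<le> s2"
  shows "(1 + d powr (-s1)) * (1 + d powr (-s2)) \<le> 2 * (1 + d powr (-(s1 + s2)))"
proof -
  define a where "a = d powr (-s1)"
  define b where "b = d powr (-s2)"
  have "0 \<le> (a - 1) * (b - 1)"
  proof (cases "d \<le> 1")
    case True
    then have "1 \<le> a" "1 \<le> b" unfolding a_def b_def using assms
      by (metis neg_le_0_iff_le powr_mono2' powr_one_eq_one)+
    then show ?thesis by simp
  next
    case False
    then have "a \<le> 1" "b \<le> 1" unfolding a_def b_def using assms
      by (metis powr_one_eq_one powr_eq_one_iff_gen neg_le_0_iff_le powr_mono nle_le)+
    then show ?thesis by (simp add: mult_nonpos_nonpos)
  qed
  moreover have "d powr (-(s1 + s2)) = a * b" unfolding a_def b_def by (simp flip: powr_add)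
  moreover have "0 \<le> a * b" unfolding a_def b_def by simp
  ultimately show ?thesis unfolding a_def[symmetric] b_def[symmetric] by (simp add: algebra_simps)
qed

lemma weight_mult_le:
  assumes "dist_pos A X" "0 \<le> s1" "0 \<le> s2"
  shows "weight s1 A X * weight s2 A X \<le> 2 * weight (s1 + s2) A X"
  using assms one_plus_powr_mult_le[of "setdist A X" s1 s2]
  unfolding dist_pos_def weight_def by auto

lemma mult_in_Ispace:
  fixes f :: "'a::euclidean_space \<Rightarrow> complex"
  assumes "closed X" "smooth_on (- X) f" "\<phi> \<in> Ispace X"
  shows "(\<lambda>x. f x * \<phi> x) \<in> Ispace X"
proof -
  have "smooth_on UNIV \<phi>" "Supp \<phi> \<subseteq> - X" using assms(3) unfolding Ispace_def by auto
  then have "smooth_on UNIV (\<lambda>x. f x * \<phi> x)"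
    using assms(1,2) by (intro smooth_on_UNIV_mult_Supp_subset) auto
  then show ?thesis using Supp_mult_subset assms(3) unfolding Ispace_def by blast
qed

lemma seminorm_on_mult_le_weight:
  fixes f :: "'a::euclidean_space \<Rightarrow> complex"
  assumes "closed X" "smooth_on (- X) f" "\<phi> \<in> Ispace X" "dist_pos (Supp \<phi>) X"
    and "compact K" "0 \<le> C" "0 \<le> s"
    and f_bound: "\<forall>x\<in>K - X. seminorm_on {x} k f \<le> C * weight s {x} X"
  shows "seminorm_on K k (\<lambda>x. f x * \<phi> x) \<le> 2 ^ k * (C * weight s (Supp \<phi>) X) * seminorm_on K k \<phi>"
proof (rule seminorm_on_mult_le)
  show "smooth_on UNIV \<phi>" and Supp_\<phi>: "Supp \<phi> \<subseteq> - X" using assms(3) unfolding Ispace_def by auto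
  show "open (- X)" using assms(1) by blast
  show "0 \<le> C * weight s (Supp \<phi>) X" using assms(6) by simp
  fix x assume x: "x \<in> K \<inter> Supp \<phi>"
  then have "seminorm_on {x} k f \<le> C * weight s {x} X" using f_bound Supp_\<phi> by blast
  also have "\<dots> \<le> C * weight s (Supp \<phi>) X"
    using weight_antimono[OF assms(4), of "{x}" s] x assms(6,7) by (simp add: mult_left_mono)
  finally show "seminorm_on {x} k f \<le> C * weight s (Supp \<phi>) X" .
qed (use assms in auto)

theorem proposition6p3:
  fixes X :: "'a::euclidean_space set"
    and K :: "nat \<Rightarrow> 'a set"
    and t :: "('a \<Rightarrow> complex) \<Rightarrow> complex"
    and f :: "'a \<Rightarrow> complex"
    and C1 s1 C2 s2 :: real and k l :: nat
  assumes "closed X"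
    and "fundamental_seq K"
    and "compact_distribution (- X) t"
    and "smooth_on (- X) f"
    and "C1 > 0" and "s1 > 0" and "l \<ge> 1"
    and hyp1: "\<forall>\<phi>\<in>Ispace X. dist_pos (Supp \<phi>) X \<longrightarrow>
                 norm (t \<phi>) \<le> C1 * weight s1 (Supp \<phi>) X * seminorm_on (K l) k \<phi>"
    and hyp2: "\<forall>k'::nat. \<forall>K'. compact K' \<longrightarrow> (\<exists>C2' s2'. C2' > 0 \<and> s2' > 0 \<and>
                 (\<forall>x\<in>K' - X. seminorm_on {x} k' f \<le> C2' * weight s2' {x} X))"
    and "C2 > 0" and "s2 > 0"
    and hyp2kl: "\<forall>x\<in>K l - X. seminorm_on {x} k f \<le> C2 * weight s2 {x} X"
  shows "\<exists>C>0. \<forall>\<phi>\<in>Ispace X. dist_pos (Supp \<phi>) X \<longrightarrow>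
           norm (t (\<lambda>x. f x * \<phi> x)) \<le> C * weight (s1 + s2) (Supp \<phi>) X * seminorm_on (K l) k \<phi>"
proof (intro exI[of _ "2 * 2 ^ k * C1 * C2"] conjI ballI impI)
  show "0 < 2 * 2 ^ k * C1 * C2" using \<open>C1 > 0\<close> \<open>C2 > 0\<close> by simp
  fix \<phi> assume \<phi>: "\<phi> \<in> Ispace X" and dist_\<phi>: "dist_pos (Supp \<phi>) X"
  let ?g = "\<lambda>x. f x * \<phi> x" and ?W = "\<lambda>s. weight s (Supp \<phi>) X"
  define M where "M = seminorm_on (K l) k \<phi>"
  have compact_K: "compact (K l)"
    using \<open>fundamental_seq K\<close> \<open>l \<ge> 1\<close> unfolding fundamental_seq_def by blast
  have "smooth_on (K l) \<phi>" using \<phi> smooth_on_subset unfolding Ispace_def by blast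
  then have "0 \<le> M" unfolding M_def
    by (intro seminorm_on_nonneg seminorm_on_bdd_above_compact compact_K)
  have "norm (t ?g) \<le> C1 * weight s1 (Supp ?g) X * seminorm_on (K l) k ?g"
    using hyp1 mult_in_Ispace[OF \<open>closed X\<close> \<open>smooth_on (- X) f\<close> \<phi>]
          dist_pos_subset[OF dist_\<phi> Supp_mult_subset] by blast
  also have "\<dots> \<le> C1 * weight s1 (Supp ?g) X * (2 ^ k * (C2 * ?W s2) * M)"
    unfolding M_def using \<open>C1 > 0\<close> \<open>C2 > 0\<close> \<open>s2 > 0\<close>
    by (intro mult_left_mono seminorm_on_mult_le_weight[OF \<open>closed X\<close> \<open>smooth_on (- X) f\<close> \<phi>
          dist_\<phi> compact_K _ _ hyp2kl]) auto
  also have "\<dots> \<le> C1 * ?W s1 * (2 ^ k * (C2 * ?W s2) * M)"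
    using weight_antimono[OF dist_\<phi> Supp_mult_subset] \<open>C1 > 0\<close> \<open>C2 > 0\<close> \<open>s1 > 0\<close> \<open>0 \<le> M\<close>
    by (intro mult_right_mono mult_left_mono) auto
  also have "\<dots> = 2 ^ k * C1 * C2 * M * (?W s1 * ?W s2)" by (simp add: algebra_simps)
  also have "\<dots> \<le> 2 ^ k * C1 * C2 * M * (2 * ?W (s1 + s2))"
    using weight_mult_le[OF dist_\<phi>] \<open>s1 > 0\<close> \<open>s2 > 0\<close> \<open>C1 > 0\<close> \<open>C2 > 0\<close> \<open>0 \<le> M\<close>
    by (intro mult_left_mono) auto
  finally show "norm (t ?g) \<le> 2 * 2 ^ k * C1 * C2 * ?W (s1 + s2) * seminorm_on (K l) k \<phi>"
    by (simp add: M_def algebra_simps)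
qed

end
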